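(* Let $M$ be a generic regular closed curve parameterized by $S^1\ni s\mapsto f(s)\in\mathbb{R}^2$, and let $C$ be a smooth branch of the Centre Symmetry Set of $M$ that connects two inflexion points $f(t_1)$ and $f(t_2)$ of $M$. Then the number of inflexion points of $M$ on the arc $f\big((t_1,t_2)\big)$ is even.
   Context: Generic: $f$ is regular with only transversal self-crossings, only non-degenerate inflexion points (curvature changes sign, $\det(f',f''')\ne0$), no undulation points, at least one point of each parallel pair is not an inflexion point, and further non-degeneracy conditions on parallel pairs hold. Distinct points of $M$ form a parallel pair if their tangent lines are parallel; $\mathrm{CSS}(M)$ is the envelope of lines through parallel pairs, locally parameterized near a parallel pair $a=f(s)$, $b=g(t(s))$ (local arc-length parameterizations with $f'(s)=-g'(t(s))$) by $\frac{\kappa_f(s)f(s)+\kappa_g(t(s))g(t(s))}{\kappa_f(s)+\kappa_g(t(s))}$; where the denominator vanishes the line is an asymptote. Maximal such smooth curves are smooth semi-branches; those sharing an asymptote are joined, giving smooth branches. A branch connects two inflexion points if at each of its two ends the generating parallel pairs converge (both points) to that inflexion point. $f((t_1,t_2))$ is the open arc from $f(t_1)$ to $f(t_2)$ following the orientation of $S^1$. *)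

theory Defs
  imports "HOL-Analysis.Analysis"
begin

text \<open>Plane curves are modelled as maps \<open>real \<Rightarrow> complex\<close> (the plane is \<open>\<complex> = \<real>\<^sup>2\<close>),
  closed curves parameterised by \<open>S\<^sup>1 = \<real>/2\<pi>\<int>\<close> as \<open>2\<pi>\<close>-periodic maps.\<close>

fun Dn :: "nat \<Rightarrow> (real \<Rightarrow> complex) \<Rightarrow> real \<Rightarrow> complex" where
  "Dn 0 f = f"
| "Dn (Suc n) f = (\<lambda>x. vector_derivative (Dn n f) (at x))"

definition cross :: "complex \<Rightarrow> complex \<Rightarrow> real" where
  "cross a b = Re a * Im b - Im a * Re b"

definition smooth_curve :: "(real \<Rightarrow> complex) \<Rightarrow> bool" where
  "smooth_curve f \<longleftrightarrow> (\<forall>n x. (Dn n f has_vector_derivative Dn (Suc n) f x) (at x))"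

definition closed_curve_2pi :: "(real \<Rightarrow> complex) \<Rightarrow> bool" where
  "closed_curve_2pi f \<longleftrightarrow> (\<forall>s. f (s + 2 * pi) = f s)"

definition regular_curve :: "(real \<Rightarrow> complex) \<Rightarrow> bool" where
  "regular_curve f \<longleftrightarrow> (\<forall>s. Dn 1 f s \<noteq> 0)"

definition same_param :: "real \<Rightarrow> real \<Rightarrow> bool" where
  "same_param s t \<longleftrightarrow> (\<exists>k::int. t = s + 2 * pi * of_int k)"

definition inflexion :: "(real \<Rightarrow> complex) \<Rightarrow> real \<Rightarrow> bool" where
  "inflexion f s \<longleftrightarrow> cross (Dn 1 f s) (Dn 2 f s) = 0"

definition undulation :: "(real \<Rightarrow> complex) \<Rightarrow> real \<Rightarrow> bool" where
  "undulation f s \<longleftrightarrow> inflexion f s \<and> cross (Dn 1 f s) (Dn 3 f s) = 0"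

definition parallel_pair :: "(real \<Rightarrow> complex) \<Rightarrow> real \<Rightarrow> real \<Rightarrow> bool" where
  "parallel_pair f s t \<longleftrightarrow> f s \<noteq> f t \<and> cross (Dn 1 f s) (Dn 1 f t) = 0"

definition generic_curve :: "(real \<Rightarrow> complex) \<Rightarrow> bool" where
  "generic_curve f \<longleftrightarrow>
     smooth_curve f \<and> closed_curve_2pi f \<and> regular_curve f \<and>
     (\<forall>s t. \<not> same_param s t \<and> f s = f t \<longrightarrow> cross (Dn 1 f s) (Dn 1 f t) \<noteq> 0) \<and>
     (\<forall>s. inflexion f s \<longrightarrow> cross (Dn 1 f s) (Dn 3 f s) \<noteq> 0) \<and>
     (\<forall>s. \<not> undulation f s) \<and>
     (\<forall>s t. parallel_pair f s t \<longrightarrow> \<not> (inflexion f s \<and> inflexion f t))"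

text \<open>A smooth branch of the CSS, given by its generating family of parallel pairs
  \<open>u \<mapsto> (f(\<sigma> u), f(\<tau> u))\<close>, \<open>u \<in> (0,1)\<close> (a smooth regular curve in the space of parameter
  pairs; passing through asymptotes of the CSS is allowed), which connects the inflexion
  points \<open>f(t\<^sub>1)\<close> (at \<open>u \<rightarrow> 0\<close>) and \<open>f(t\<^sub>2)\<close> (at \<open>u \<rightarrow> 1\<close>): at each end both points of the
  generating pairs converge (on \<open>S\<^sup>1\<close>) to the respective inflexion point.\<close>
definition css_branch_connecting ::
  "(real \<Rightarrow> complex) \<Rightarrow> (real \<Rightarrow> real) \<Rightarrow> (real \<Rightarrow> real) \<Rightarrow> real \<Rightarrow> real \<Rightarrow> bool" where
  "css_branch_connecting f \<sigma> \<tau> t1 t2 \<longleftrightarrow>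
     \<sigma> C1_differentiable_on {0<..<1} \<and> \<tau> C1_differentiable_on {0<..<1} \<and>
     (\<forall>u\<in>{0<..<1}. vector_derivative \<sigma> (at u) \<noteq> 0 \<or> vector_derivative \<tau> (at u) \<noteq> 0) \<and>
     (\<forall>u\<in>{0<..<1}. parallel_pair f (\<sigma> u) (\<tau> u)) \<and>
     inflexion f t1 \<and> inflexion f t2 \<and>
     ((\<lambda>u. cis (\<sigma> u)) \<longlongrightarrow> cis t1) (at_right 0) \<and>
     ((\<lambda>u. cis (\<tau> u)) \<longlongrightarrow> cis t1) (at_right 0) \<and>
     ((\<lambda>u. cis (\<sigma> u)) \<longlongrightarrow> cis t2) (at_left 1) \<and>
     ((\<lambda>u. cis (\<tau> u)) \<longlongrightarrow> cis t2) (at_left 1)"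

text \<open>parameters of the open arc \<open>f((t\<^sub>1,t\<^sub>2))\<close> from \<open>f(t\<^sub>1)\<close> to \<open>f(t\<^sub>2)\<close> following the orientation\<close>
definition arc_params :: "real \<Rightarrow> real \<Rightarrow> real set" where
  "arc_params t1 t2 =
     {s. t1 < s \<and> s < t1 + ((t2 - t1) - 2 * pi * of_int \<lfloor>(t2 - t1) / (2 * pi)\<rfloor>)}"

end

theory Submission
  imports Defs
begin

text \<open>Write \<open>curv = det(f', f'')\<close>; its zeros are the inflexions, and they are simple. Along the
  branch \<open>u \<mapsto> (\<sigma> u, \<tau> u)\<close>, differentiating \<open>det(f'(\<sigma>), f'(\<tau>)) = 0\<close> gives
  \<open>A \<sigma>' + B \<tau>' = 0\<close>, and \<open>Q = A \<tau>' - B \<sigma>'\<close> never vanishes because the two points of a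
  parallel pair are never both inflexions; so \<open>Q\<close> has constant sign. Near a simple inflexion
  \<open>t\<close> the two points of a parallel pair lie on opposite sides of \<open>t\<close>, hence the tangent of the
  angle from \<open>f'(t)\<close> to \<open>f'(\<sigma>)\<close>, multiplied by \<open>curv'(t)\<close>, is positive, tends to \<open>0\<close> at the
  end of the branch that converges to \<open>t\<close>, and has derivative of the sign of \<open>Q curv'(t)\<close>.
  Being positive with limit \<open>0\<close>, it increases somewhere near \<open>u = 0\<close> and decreases somewhere
  near \<open>u = 1\<close>, so \<open>curv'(t\<^sub>1)\<close> and \<open>curv'(t\<^sub>2)\<close> have opposite signs. Then \<open>curv\<close> has the same sign just after \<open>t\<^sub>1\<close> and
  just before \<open>t\<^sub>2\<close>, so it has an even number of simple zeros in between.\<close>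

section \<open>Plane vectors\<close>

lemma cross_conv_cnj: "cross a b = Im (cnj a * b)"
  by (simp add: cross_def)

lemma cross_self [simp]: "cross a a = 0"
  by (simp add: cross_def)

lemma cross_commute: "cross a b = - cross b a"
  by (simp add: cross_def)

lemma cross_scaleR_left [simp]: "cross (c *\<^sub>R a) b = c * cross a b"
  and cross_scaleR_right [simp]: "cross a (c *\<^sub>R b) = c * cross a b"
  by (simp_all add: cross_def algebra_simps)

lemma cross_eq_0_imp_scaleR:
  assumes "cross a b = 0" "a \<noteq> 0"
  shows "\<exists>c. b = c *\<^sub>R a"
proof
  have rel: "Re a * Im b = Im a * Re b" using assms(1) by (simp add: cross_def)
  have n: "(Re a)\<^sup>2 + (Im a)\<^sup>2 \<noteq> 0" using assms(2) by (simp add: complex_eq_iff)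
  show "b = ((a \<bullet> b) / (norm a)\<^sup>2) *\<^sub>R a"
    using n rel by (simp add: complex_eq_iff cmod_power2 inner_complex_def field_simps) algebra
qed

lemma cross_lagrange:
  "cross v b * (v \<bullet> a) - cross v a * (v \<bullet> b) = (norm v)\<^sup>2 * cross a b"
  unfolding cmod_power2 by (simp add: cross_def inner_complex_def algebra_simps power2_eq_square)

lemma has_real_derivative_cross:
  assumes "(g has_vector_derivative g') (at x within S)"
      and "(h has_vector_derivative h') (at x within S)"
  shows "((\<lambda>x. cross (g x) (h x)) has_real_derivative cross g' (h x) + cross (g x) h') (at x within S)"
proof -
  have "((\<lambda>x. cnj (g x) * h x) has_vector_derivative cnj (g x) * h' + cnj g' * h x) (at x within S)"
    by (intro derivative_intros assms)
  from bounded_linear.has_vector_derivative[OF bounded_linear_Im this] show ?thesis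
    by (simp add: has_real_derivative_iff_has_vector_derivative cross_conv_cnj algebra_simps)
qed

lemma has_real_derivative_inner_left:
  assumes "(h has_vector_derivative h') (at x within S)"
  shows "((\<lambda>x. v \<bullet> h x) has_real_derivative v \<bullet> h') (at x within S)"
  using bounded_linear.has_vector_derivative[OF bounded_linear_inner_right assms]
  by (simp add: has_real_derivative_iff_has_vector_derivative)

section \<open>Parameters on the circle\<close>

lemma periodic_2pi_same_param:
  assumes "\<And>x. g (x + 2 * pi) = g x" and "same_param s t"
  shows "g t = g s"
proof -
  have "g (x + 2 * pi * of_int k) = g x" for x k
  proof (induction k arbitrary: x rule: int_induct[where k = 0])
    case (step1 i)
    have "g (x + 2 * pi * of_int (i + 1)) = g ((x + 2 * pi * of_int i) + 2 * pi)"
      by (simp add: algebra_simps)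
    then show ?case
      using assms(1) step1 by simp
  next
    case (step2 i)
    have "g (x + 2 * pi * of_int (i - 1)) = g ((x + 2 * pi * of_int (i - 1)) + 2 * pi)"
      using assms(1) by simp
    also have "\<dots> = g (x + 2 * pi * of_int i)"
      by (simp add: algebra_simps)
    finally show ?case
      using step2 by simp
  qed simp
  then show ?thesis
    using assms(2) unfolding same_param_def by auto
qed

lemma cis_eq_imp_same_param: "cis s = cis t \<Longrightarrow> same_param s t"
  using sin_cos_eq_iff[of t s] by (simp add: complex_eq_iff same_param_def)

lemma tendsto_cis_obtain_representative:
  assumes "((\<lambda>u. cis (g u)) \<longlongrightarrow> cis t) F"
  obtains r where "\<And>u. same_param (r u) (g u)" and "(r \<longlongrightarrow> t) F"
proof
  define r where "r u = t + Arg (cis (g u - t))" for u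
  show "same_param (r u) (g u)" for u
  proof (rule cis_eq_imp_same_param)
    have "cis (r u) = cis t * cis (Arg (cis (g u - t)))"
      by (simp add: r_def cis_mult)
    also have "\<dots> = cis (g u)"
      by (simp add: cis_Arg cis_mult)
    finally show "cis (r u) = cis (g u)" .
  qed
  have "((\<lambda>u. cis (g u - t)) \<longlongrightarrow> 1) F"
    using tendsto_divide[OF assms tendsto_const[of "cis t"]] by (simp add: cis_divide)
  moreover have "isCont Arg 1"
    by (rule continuous_at_Arg) simp
  ultimately have "((\<lambda>u. Arg (cis (g u - t))) \<longlongrightarrow> 0) F"
    using isCont_tendsto_compose[of 1 Arg] by fastforce
  then show "(r \<longlongrightarrow> t) F"
    unfolding r_def[abs_def] using tendsto_add[OF tendsto_const[of t]] by fastforce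
qed

lemma arc_params_eq_interval:
  assumes "\<not> same_param t1 t2"
  obtains T where "same_param t2 T" "t1 < T" "arc_params t1 t2 = {t1<..<T}"
proof
  define k where "k = \<lfloor>(t2 - t1) / (2 * pi)\<rfloor>"
  define T where "T = t1 + ((t2 - t1) - 2 * pi * of_int k)"
  show "arc_params t1 t2 = {t1<..<T}"
    by (auto simp: arc_params_def T_def k_def)
  show "same_param t2 T"
    unfolding same_param_def by (rule exI[of _ "- k"]) (simp add: T_def)
  have "of_int k \<le> (t2 - t1) / (2 * pi)"
    unfolding k_def by linarith
  then have "t1 \<le> T"
    by (simp add: T_def field_simps)
  moreover have "t1 \<noteq> T"
    using assms unfolding same_param_def T_def by force
  ultimately show "t1 < T"
    by simp
qed

section \<open>Real functions with simple zeros\<close>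

lemma MVT_between:
  fixes \<phi> \<phi>' :: "real \<Rightarrow> real"
  assumes "s \<noteq> t" and "\<And>x. \<bar>x - t\<bar> \<le> \<bar>s - t\<bar> \<Longrightarrow> (\<phi> has_real_derivative \<phi>' x) (at x)"
  obtains z where "0 < (z - t) * (s - t)" "\<bar>z - t\<bar> < \<bar>s - t\<bar>" "\<phi> s - \<phi> t = (s - t) * \<phi>' z"
proof (cases "t < s")
  case True
  then obtain z where "t < z" "z < s" "\<phi> s - \<phi> t = (s - t) * \<phi>' z"
    using MVT2[of t s \<phi> \<phi>'] assms(2) by force
  then show ?thesis
    by (intro that[of z]) auto
next
  case False
  then have "s < t"
    using assms(1) by simp
  then obtain z where "s < z" "z < t" "\<phi> t - \<phi> s = (t - s) * \<phi>' z"
    using MVT2[of s t \<phi> \<phi>'] assms(2) by force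
  show ?thesis
  proof (rule that[of z])
    show "0 < (z - t) * (s - t)"
      using \<open>s < z\<close> \<open>z < t\<close> by (intro mult_neg_neg) auto
  qed (use \<open>s < z\<close> \<open>z < t\<close> \<open>\<phi> t - \<phi> s = (t - s) * \<phi>' z\<close> in \<open>auto simp: algebra_simps\<close>)
qed

lemma simple_zero_sign:
  fixes g :: "real \<Rightarrow> real"
  assumes "(g has_real_derivative l) (at z)" "g z = 0" "l \<noteq> 0"
  shows simple_zero_sign_right: "\<forall>\<^sub>F y in at_right z. 0 < g y * l"
    and simple_zero_sign_left: "\<forall>\<^sub>F y in at_left z. g y * l < 0"
proof -
  have "((\<lambda>y. g y / (y - z) * l) \<longlongrightarrow> l * l) (at z)"
    using assms(1,2) by (intro tendsto_mult_right) (simp add: has_field_derivative_iff)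
  moreover have "0 < l * l"
    using assms(3) by (metis not_real_square_gt_zero)
  ultimately have "\<forall>\<^sub>F y in at z. 0 < g y / (y - z) * l"
    by (rule order_tendstoD(1))
  then have right: "\<forall>\<^sub>F y in at_right z. 0 < g y / (y - z) * l"
    and left: "\<forall>\<^sub>F y in at_left z. 0 < g y / (y - z) * l"
    by (simp_all add: eventually_at_split)
  show "\<forall>\<^sub>F y in at_right z. 0 < g y * l"
    using right eventually_at_right_less[of z]
    by eventually_elim (auto simp: zero_less_mult_iff zero_less_divide_iff)
  have "\<forall>\<^sub>F y in at_left z. y < z"
    by (simp add: eventually_at_filter)
  with left show "\<forall>\<^sub>F y in at_left z. g y * l < 0"
    by eventually_elim (auto simp: zero_less_mult_iff zero_less_divide_iff mult_less_0_iff)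
qed

lemma eventually_nonzero_near_simple_zero:
  fixes g :: "real \<Rightarrow> real"
  assumes "(g has_real_derivative l) (at z)" "g z = 0 \<Longrightarrow> l \<noteq> 0"
  shows "\<forall>\<^sub>F y in at z. g y \<noteq> 0"
proof (cases "g z = 0")
  case True
  then show ?thesis
    using simple_zero_sign[OF assms(1) True assms(2)[OF True]]
    by (auto simp: eventually_at_split elim: eventually_mono)
next
  case False
  then show ?thesis
    using assms(1) DERIV_isCont isContD tendsto_imp_eventually_ne by blast
qed

lemma finite_simple_zeros_compact:
  fixes g g' :: "real \<Rightarrow> real"
  assumes "\<And>x. (g has_real_derivative g' x) (at x)" "\<And>x. g x = 0 \<Longrightarrow> g' x \<noteq> 0"
    and "compact S"
  shows "finite {x \<in> S. g x = 0}"
proof (rule ccontr)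
  assume "infinite {x \<in> S. g x = 0}"
  then obtain x where "x islimpt {x \<in> S. g x = 0}"
    using Heine_Borel_imp_Bolzano_Weierstrass[OF assms(3)] by blast
  moreover have "\<forall>\<^sub>F y in at x. y \<notin> {x \<in> S. g x = 0}"
    by (rule eventually_mono[OF eventually_nonzero_near_simple_zero[OF assms(1,2)]]) auto
  ultimately show False
    by (simp add: islimpt_iff_eventually)
qed

lemma nonzero_imp_same_sign:
  fixes g :: "real \<Rightarrow> real"
  assumes "connected S" "continuous_on S g" "\<And>x. x \<in> S \<Longrightarrow> g x \<noteq> 0" "x \<in> S" "y \<in> S"
  shows "0 < g x * g y"
proof (rule ccontr)
  assume "\<not> 0 < g x * g y"
  then have "g x \<le> 0 \<and> 0 \<le> g y \<or> g y \<le> 0 \<and> 0 \<le> g x"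
    by (auto simp: zero_less_mult_iff)
  moreover have "connected (g ` S)"
    using assms(2,1) by (rule connected_continuous_image)
  ultimately have "0 \<in> g ` S"
    using connected_ivt_component[of "g ` S" "g x" "g y" 1 0]
      connected_ivt_component[of "g ` S" "g y" "g x" 1 0] assms(4,5) by auto
  then show False
    using assms(3) by auto
qed

lemma first_simple_zero_sign_change:
  fixes g g' :: "real \<Rightarrow> real"
  assumes deriv: "\<And>x. (g has_real_derivative g' x) (at x)"
    and simple: "\<And>x. g x = 0 \<Longrightarrow> g' x \<noteq> 0"
    and "g a \<noteq> 0" "g b \<noteq> 0" and nonempty: "{x \<in> {a..b}. g x = 0} \<noteq> {}"
  defines "Z \<equiv> {x \<in> {a..b}. g x = 0}"
  obtains c where "c < b" "g a * g c < 0" "{x \<in> {c..b}. g x = 0} = Z - {Min Z}"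
proof -
  have cont: "continuous_on S g" for S
    using deriv by (meson DERIV_isCont continuous_at_imp_continuous_on)
  have "finite Z"
    unfolding Z_def using finite_simple_zeros_compact[OF deriv simple] by blast
  with nonempty[folded Z_def] have "Min Z \<in> Z" and Z_ge: "\<And>x. x \<in> Z \<Longrightarrow> Min Z \<le> x"
    by simp_all
  define z where "z = Min Z"
  have "a < z" "z < b" "g z = 0"
    using \<open>Min Z \<in> Z\<close> assms(3,4) by (auto simp: Z_def z_def order.order_iff_strict)
  obtain e where "z < e" and right: "\<And>y. z < y \<Longrightarrow> y < e \<Longrightarrow> 0 < g y * g' z"
    using simple_zero_sign_right[OF deriv \<open>g z = 0\<close> simple[OF \<open>g z = 0\<close>]]
    by (auto simp: eventually_at_right_field)
  obtain e' where "e' < z" and left: "\<And>y. e' < y \<Longrightarrow> y < z \<Longrightarrow> g y * g' z < 0"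
    using simple_zero_sign_left[OF deriv \<open>g z = 0\<close> simple[OF \<open>g z = 0\<close>]]
    by (auto simp: eventually_at_left_field)
  define c where "c = (z + min e b) / 2"
  define y where "y = (max e' a + z) / 2"
  have "z < c" "c < e" "c < b" "a < y" "e' < y" "y < z"
    using \<open>z < e\<close> \<open>z < b\<close> \<open>e' < z\<close> \<open>a < z\<close> by (auto simp: c_def y_def)
  have "0 < g a * g y"
    using Z_ge \<open>a < y\<close> \<open>y < z\<close> \<open>z < b\<close>
    by (intro nonzero_imp_same_sign[OF connected_Icc[of a y] cont]) (fastforce simp: Z_def z_def)+
  moreover have "g y * g' z < 0" "0 < g c * g' z"
    using left right \<open>e' < y\<close> \<open>y < z\<close> \<open>z < c\<close> \<open>c < e\<close> by auto
  ultimately have "g a * g c < 0"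
    by (auto simp: zero_less_mult_iff mult_less_0_iff)
  moreover have "{x \<in> {c..b}. g x = 0} = Z - {z}"
  proof (intro equalityI subsetI)
    fix x
    assume "x \<in> {x \<in> {c..b}. g x = 0}"
    then show "x \<in> Z - {z}"
      using \<open>a < z\<close> \<open>z < c\<close> by (auto simp: Z_def)
  next
    fix x
    assume x: "x \<in> Z - {z}"
    then have "z < x" "g x = 0"
      using Z_ge by (force simp: z_def Z_def)+
    then have "e \<le> x"
      using right[of x] by force
    then show "x \<in> {x \<in> {c..b}. g x = 0}"
      using x \<open>c < e\<close> by (auto simp: Z_def)
  qed
  ultimately show ?thesis
    using that \<open>c < b\<close> by (simp add: z_def)
qed

lemma even_card_simple_zeros_iff_same_sign:
  fixes g g' :: "real \<Rightarrow> real"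
  assumes deriv: "\<And>x. (g has_real_derivative g' x) (at x)"
    and simple: "\<And>x. g x = 0 \<Longrightarrow> g' x \<noteq> 0"
    and "a \<le> b" "g a \<noteq> 0" "g b \<noteq> 0"
  shows "even (card {x \<in> {a..b}. g x = 0}) \<longleftrightarrow> 0 < g a * g b"
proof -
  have cont: "continuous_on S g" for S
    using deriv by (meson DERIV_isCont continuous_at_imp_continuous_on)
  have "even n \<longleftrightarrow> 0 < g a * g b"
    if "a \<le> b" "g a \<noteq> 0" "card {x \<in> {a..b}. g x = 0} = n" for a n
    using that
  proof (induction n arbitrary: a)
    case 0
    have "finite {x \<in> {a..b}. g x = 0}"
      using finite_simple_zeros_compact[OF deriv simple] by blast
    with 0 have "\<And>x. x \<in> {a..b} \<Longrightarrow> g x \<noteq> 0"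
      by auto
    then have "0 < g a * g b"
      using \<open>a \<le> b\<close> by (intro nonzero_imp_same_sign[OF connected_Icc cont]) auto
    then show ?case
      by simp
  next
    case (Suc n)
    define Z where "Z = {x \<in> {a..b}. g x = 0}"
    have "finite Z"
      unfolding Z_def using finite_simple_zeros_compact[OF deriv simple] by blast
    moreover have "Z \<noteq> {}"
      using Suc.prems(3) unfolding Z_def by (metis card.empty nat.distinct(1))
    ultimately have "Min Z \<in> Z"
      by simp
    obtain c where "c < b" "g a * g c < 0" and Zc: "{x \<in> {c..b}. g x = 0} = Z - {Min Z}"
      using first_simple_zero_sign_change[OF deriv simple \<open>g a \<noteq> 0\<close> \<open>g b \<noteq> 0\<close>] \<open>Z \<noteq> {}\<close>
      unfolding Z_def by blast
    have "card {x \<in> {c..b}. g x = 0} = n"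
      unfolding Zc using Suc.prems(3) \<open>finite Z\<close> \<open>Min Z \<in> Z\<close> by (simp add: Z_def)
    moreover have "g c \<noteq> 0"
      using \<open>g a * g c < 0\<close> by auto
    ultimately have "even n \<longleftrightarrow> 0 < g c * g b"
      using Suc.IH \<open>c < b\<close> by simp
    then show ?case
      using \<open>g a * g c < 0\<close> \<open>g b \<noteq> 0\<close> by (auto simp: zero_less_mult_iff mult_less_0_iff)
  qed
  then show ?thesis
    using assms by blast
qed

lemma even_card_simple_zeros_between:
  fixes g g' :: "real \<Rightarrow> real"
  assumes deriv: "\<And>x. (g has_real_derivative g' x) (at x)"
    and simple: "\<And>x. g x = 0 \<Longrightarrow> g' x \<noteq> 0"
    and "s < t" "g s = 0" "g t = 0" "g' s * g' t < 0"
  shows "even (card {x \<in> {s<..<t}. g x = 0})"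
proof -
  obtain e where "s < e" and right: "\<And>y. s < y \<Longrightarrow> y < e \<Longrightarrow> 0 < g y * g' s"
    using simple_zero_sign_right[OF deriv \<open>g s = 0\<close> simple[OF \<open>g s = 0\<close>]]
    by (auto simp: eventually_at_right_field)
  obtain e' where "e' < t" and left: "\<And>y. e' < y \<Longrightarrow> y < t \<Longrightarrow> g y * g' t < 0"
    using simple_zero_sign_left[OF deriv \<open>g t = 0\<close> simple[OF \<open>g t = 0\<close>]]
    by (auto simp: eventually_at_left_field)
  define h where "h = min (min (e - s) (t - e')) (t - s) / 3"
  have "0 < h" "h \<le> (e - s) / 3" "h \<le> (t - e') / 3" "h \<le> (t - s) / 3"
    using \<open>s < e\<close> \<open>e' < t\<close> \<open>s < t\<close> by (auto simp: h_def)
  with \<open>s < e\<close> \<open>e' < t\<close> \<open>s < t\<close> have h: "0 < h" "s + h < e" "e' < t - h" "s + h < t - h"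
    by auto
  have "0 < g (s + h) * g' s"
    using right[of "s + h"] h by simp
  moreover have "g (t - h) * g' t < 0"
    using left[of "t - h"] h by simp
  ultimately have pos: "0 < g (s + h) * g (t - h)"
    using \<open>g' s * g' t < 0\<close> by (auto simp: zero_less_mult_iff mult_less_0_iff)
  moreover have "{x \<in> {s + h..t - h}. g x = 0} = {x \<in> {s<..<t}. g x = 0}"
  proof (intro set_eqI iffI)
    fix x
    assume "x \<in> {x \<in> {s + h..t - h}. g x = 0}"
    then show "x \<in> {x \<in> {s<..<t}. g x = 0}"
      using h by auto
  next
    fix x
    assume x: "x \<in> {x \<in> {s<..<t}. g x = 0}"
    have "\<not> x < s + h"
      using right[of x] x h(2) by force
    moreover have "\<not> t - h < x"
      using left[of x] x h(3) by force
    ultimately show "x \<in> {x \<in> {s + h..t - h}. g x = 0}"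
      using x by simp
  qed
  moreover have "g (s + h) \<noteq> 0" "g (t - h) \<noteq> 0"
    using pos by auto
  ultimately show ?thesis
    using even_card_simple_zeros_iff_same_sign[OF deriv simple, of "s + h" "t - h"] h(4) by simp
qed

lemma frequently_pos_deriv_at_right:
  fixes W W' :: "real \<Rightarrow> real"
  assumes lim: "(W \<longlongrightarrow> 0) (at_right a)"
    and ev: "\<forall>\<^sub>F x in at_right a. 0 < W x \<and> (W has_real_derivative W' x) (at x)"
  shows "\<exists>\<^sub>F x in at_right a. 0 < W' x"
proof (rule ccontr)
  assume "\<not> (\<exists>\<^sub>F x in at_right a. 0 < W' x)"
  then have "\<forall>\<^sub>F x in at_right a. W' x \<le> 0"
    by (simp add: not_frequently not_less)
  with ev have "\<forall>\<^sub>F x in at_right a. (0 < W x \<and> (W has_real_derivative W' x) (at x)) \<and> W' x \<le> 0"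
    by (rule eventually_conj)
  then obtain b where "a < b" and b: "\<And>x. a < x \<Longrightarrow> x < b \<Longrightarrow>
      0 < W x \<and> (W has_real_derivative W' x) (at x) \<and> W' x \<le> 0"
    by (auto simp: eventually_at_right_field)
  define y where "y = (a + b) / 2"
  have "a < y" "y < b"
    using \<open>a < b\<close> by (auto simp: y_def)
  then have "\<forall>\<^sub>F x in at_right a. W x < W y"
    using b[of y] lim by (intro order_tendstoD(2)) auto
  then obtain c where "a < c" and c: "\<And>x. a < x \<Longrightarrow> x < c \<Longrightarrow> W x < W y"
    by (auto simp: eventually_at_right_field)
  define x where "x = (a + min c y) / 2"
  have "a < x" "x < c" "x < y"
    using \<open>a < c\<close> \<open>a < y\<close> by (auto simp: x_def)
  have "W y \<le> W x"
  proof (rule DERIV_nonpos_imp_nonincreasing[of x y W])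
    show "x \<le> y"
      using \<open>x < y\<close> by simp
    fix z
    assume "x \<le> z" "z \<le> y"
    then have "a < z" "z < b"
      using \<open>a < x\<close> \<open>y < b\<close> by auto
    then show "\<exists>D. (W has_real_derivative D) (at z) \<and> D \<le> 0"
      using b by blast
  qed
  with c[OF \<open>a < x\<close> \<open>x < c\<close>] show False
    by simp
qed

lemma frequently_neg_deriv_at_left:
  fixes W W' :: "real \<Rightarrow> real"
  assumes "(W \<longlongrightarrow> 0) (at_left b)"
    and "\<forall>\<^sub>F x in at_left b. 0 < W x \<and> (W has_real_derivative W' x) (at x)"
  shows "\<exists>\<^sub>F x in at_left b. W' x < 0"
proof -
  have "\<exists>\<^sub>F x in at_right (- b). 0 < - W' (- x)"
  proof (rule frequently_pos_deriv_at_right)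
    show "((\<lambda>x. W (- x)) \<longlongrightarrow> 0) (at_right (- b))"
      using assms(1) by (simp add: at_left_minus filterlim_filtermap)
    have "\<forall>\<^sub>F x in at_right (- b). 0 < W (- x) \<and> (W has_real_derivative W' (- x)) (at (- x))"
      using assms(2) by (simp add: at_left_minus eventually_filtermap)
    then show "\<forall>\<^sub>F x in at_right (- b). 0 < W (- x) \<and>
        ((\<lambda>x. W (- x)) has_real_derivative - W' (- x)) (at x)"
    proof eventually_elim
      case (elim x)
      then show ?case
        using DERIV_chain2[of W "W' (- x)" "\<lambda>x. - x" x "- 1"] by (simp add: DERIV_minus DERIV_ident)
    qed
  qed
  then show ?thesis
    by (simp add: at_left_minus frequently_filtermap)
qed

section \<open>Generic closed curves\<close>

(* Higher derivatives are reached through has_vector_derivative_Dn, never by unfolding Dn. *)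
declare Dn.simps(2) [simp del]

lemma Dn_shift_periodic:
  assumes "smooth_curve f" and "\<And>x. f (x + c) = f x"
  shows "Dn n f (x + c) = Dn n f x"
proof (induction n arbitrary: x)
  case (Suc n)
  have "((\<lambda>y. y + c) has_vector_derivative 1) (at x)"
    by (auto intro!: derivative_eq_intros simp: has_real_derivative_iff_has_vector_derivative[symmetric])
  then have "((Dn n f \<circ> (\<lambda>y. y + c)) has_vector_derivative 1 *\<^sub>R Dn (Suc n) f (x + c)) (at x)"
    using assms(1) unfolding smooth_curve_def by (intro vector_diff_chain_at) blast+
  then have "(Dn n f has_vector_derivative Dn (Suc n) f (x + c)) (at x)"
    using Suc.IH by (simp add: o_def)
  moreover have "(Dn n f has_vector_derivative Dn (Suc n) f x) (at x)"
    using assms(1) by (simp add: smooth_curve_def)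
  ultimately show ?case
    by (rule vector_derivative_unique_at)
qed (use assms(2) in simp)

locale generic_plane_curve =
  fixes f :: "real \<Rightarrow> complex"
  assumes generic: "generic_curve f"
begin

lemma has_vector_derivative_Dn:
  "(Dn n f has_vector_derivative Dn (Suc n) f x) (at x within S)"
  using generic by (auto simp: generic_curve_def smooth_curve_def intro: has_vector_derivative_at_within)

lemma has_vector_derivative_Dn1: "(Dn 1 f has_vector_derivative Dn 2 f x) (at x within S)"
  and has_vector_derivative_Dn2: "(Dn 2 f has_vector_derivative Dn 3 f x) (at x within S)"
  using has_vector_derivative_Dn[of 1] has_vector_derivative_Dn[of 2]
  by (simp_all add: numeral_2_eq_2 numeral_3_eq_3)

lemma isCont_Dn: "isCont (Dn n f) x"
  using has_vector_derivative_Dn[of n x UNIV] has_vector_derivative_continuous by blast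

lemma Dn_same_param: "same_param s t \<Longrightarrow> Dn n f t = Dn n f s"
proof -
  have "Dn n f (x + 2 * pi) = Dn n f x" for x
    using generic by (intro Dn_shift_periodic) (simp_all add: generic_curve_def closed_curve_2pi_def)
  then show "same_param s t \<Longrightarrow> Dn n f t = Dn n f s"
    by (rule periodic_2pi_same_param)
qed

lemma Dn1_nonzero: "Dn 1 f s \<noteq> 0"
  using generic by (simp add: generic_curve_def regular_curve_def)

definition curv :: "real \<Rightarrow> real" where
  "curv s = cross (Dn 1 f s) (Dn 2 f s)"

definition curv' :: "real \<Rightarrow> real" where
  "curv' s = cross (Dn 1 f s) (Dn 3 f s)"

lemma has_real_derivative_curv: "(curv has_real_derivative curv' x) (at x within S)"
  using has_real_derivative_cross[OF has_vector_derivative_Dn1 has_vector_derivative_Dn2]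
  by (simp add: curv_def[abs_def] curv'_def)

lemma isCont_curv': "isCont curv' x"
  using isCont_Dn[where n = 1] isCont_Dn[where n = 3] unfolding curv'_def[abs_def] cross_def isCont_def
  by (intro tendsto_intros) auto

lemma inflexion_iff_curv: "inflexion f s \<longleftrightarrow> curv s = 0"
  by (simp add: inflexion_def curv_def)

lemma curv'_nonzero: "curv s = 0 \<Longrightarrow> curv' s \<noteq> 0"
  using generic by (simp add: generic_curve_def inflexion_def curv_def curv'_def)

lemma curv_same_param: "same_param s t \<Longrightarrow> curv t = curv s"
  and curv'_same_param: "same_param s t \<Longrightarrow> curv' t = curv' s"
  by (simp_all add: curv_def curv'_def Dn_same_param[of s t])

lemma parallel_pair_not_both_inflexions:
  "parallel_pair f a b \<Longrightarrow> curv a = 0 \<Longrightarrow> curv b \<noteq> 0"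
  using generic by (auto simp: generic_curve_def inflexion_iff_curv)

definition tan_angle :: "real \<Rightarrow> real \<Rightarrow> real" where
  "tan_angle t s = cross (Dn 1 f t) (Dn 1 f s) / (Dn 1 f t \<bullet> Dn 1 f s)"

lemma tan_angle_self [simp]: "tan_angle t t = 0"
  by (simp add: tan_angle_def)

lemma tan_angle_same_param: "same_param s s' \<Longrightarrow> tan_angle t s' = tan_angle t s"
  by (simp add: tan_angle_def Dn_same_param[of s s'])

lemma parallel_tangents_scaleR:
  assumes "cross (Dn 1 f a) (Dn 1 f b) = 0"
  obtains \<mu> where "\<mu> \<noteq> 0" "Dn 1 f b = \<mu> *\<^sub>R Dn 1 f a"
proof -
  obtain \<mu> where "Dn 1 f b = \<mu> *\<^sub>R Dn 1 f a"
    using cross_eq_0_imp_scaleR[OF assms Dn1_nonzero] by blast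
  moreover from this Dn1_nonzero[of b] have "\<mu> \<noteq> 0"
    by auto
  ultimately show ?thesis
    using that by blast
qed

lemma tan_angle_parallel:
  assumes "cross (Dn 1 f a) (Dn 1 f b) = 0"
  shows "tan_angle t a = tan_angle t b"
proof -
  obtain \<mu> where "\<mu> \<noteq> 0" "Dn 1 f b = \<mu> *\<^sub>R Dn 1 f a"
    using parallel_tangents_scaleR[OF assms] .
  then show ?thesis
    unfolding tan_angle_def by simp
qed

lemma has_real_derivative_tan_angle:
  assumes "Dn 1 f t \<bullet> Dn 1 f s \<noteq> 0"
  shows "(tan_angle t has_real_derivative
           (norm (Dn 1 f t))\<^sup>2 * curv s / (Dn 1 f t \<bullet> Dn 1 f s)\<^sup>2) (at s)"
proof -
  define v where "v = Dn 1 f t"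
  have "((\<lambda>s. cross v (Dn 1 f s) / (v \<bullet> Dn 1 f s)) has_real_derivative
      ((cross 0 (Dn 1 f s) + cross v (Dn 2 f s)) * (v \<bullet> Dn 1 f s) - cross v (Dn 1 f s) * (v \<bullet> Dn 2 f s))
        / ((v \<bullet> Dn 1 f s) * (v \<bullet> Dn 1 f s))) (at s)"
    using assms unfolding v_def
    by (intro DERIV_divide has_real_derivative_cross has_real_derivative_inner_left
        has_vector_derivative_Dn1 derivative_intros) (simp add: cross_def)
  then show ?thesis
    using cross_lagrange[of v "Dn 2 f s" "Dn 1 f s"]
    by (simp add: tan_angle_def[abs_def] v_def curv_def power2_eq_square cross_def[of 0])
qed

(* On such a neighbourhood tan_angle t is differentiable and t is the only zero of curv. *)
definition inflexion_nbhd :: "real \<Rightarrow> real \<Rightarrow> bool" where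
  "inflexion_nbhd t d \<longleftrightarrow>
     0 < d \<and> (\<forall>s. \<bar>s - t\<bar> < d \<longrightarrow> 0 < Dn 1 f t \<bullet> Dn 1 f s \<and> 0 < curv' s * curv' t)"

lemma inflexion_nbhd_exists:
  assumes "curv t = 0"
  obtains d where "inflexion_nbhd t d"
proof -
  have "isCont (\<lambda>s. Dn 1 f t \<bullet> Dn 1 f s) t" "isCont (\<lambda>s. curv' s * curv' t) t"
    by (intro continuous_intros isCont_Dn isCont_curv')+
  then have lim1: "((\<lambda>s. Dn 1 f t \<bullet> Dn 1 f s) \<longlongrightarrow> Dn 1 f t \<bullet> Dn 1 f t) (nhds t)"
    and lim2: "((\<lambda>s. curv' s * curv' t) \<longlongrightarrow> curv' t * curv' t) (nhds t)"
    unfolding isCont_def by (simp_all add: tendsto_nhds_iff)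
  have "0 < Dn 1 f t \<bullet> Dn 1 f t"
    using Dn1_nonzero by simp
  with lim1 have "\<forall>\<^sub>F s in nhds t. 0 < Dn 1 f t \<bullet> Dn 1 f s"
    by (rule order_tendstoD(1))
  moreover have "0 < curv' t * curv' t"
    using curv'_nonzero[OF assms] by (metis not_real_square_gt_zero)
  with lim2 have "\<forall>\<^sub>F s in nhds t. 0 < curv' s * curv' t"
    by (rule order_tendstoD(1))
  ultimately have "\<forall>\<^sub>F s in nhds t. 0 < Dn 1 f t \<bullet> Dn 1 f s \<and> 0 < curv' s * curv' t"
    by (rule eventually_conj)
  then show ?thesis
    using that unfolding eventually_nhds_metric dist_real_def inflexion_nbhd_def by blast
qed

context
  fixes t d :: real
  assumes inflexion: "curv t = 0" and nbhd: "inflexion_nbhd t d"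
begin

lemma inflexion_nbhdD:
  assumes "\<bar>s - t\<bar> < d"
  shows "0 < Dn 1 f t \<bullet> Dn 1 f s" "0 < curv' s * curv' t"
  using nbhd assms by (simp_all add: inflexion_nbhd_def)

lemma curv_sign_near_inflexion:
  assumes "\<bar>s - t\<bar> < d" "s \<noteq> t"
  shows "0 < curv s * curv' t * (s - t)"
proof -
  obtain z where z: "0 < (z - t) * (s - t)" "\<bar>z - t\<bar> < \<bar>s - t\<bar>" "curv s - curv t = (s - t) * curv' z"
    using MVT_between[OF assms(2) has_real_derivative_curv] .
  have "curv s = (s - t) * curv' z"
    using z(3) inflexion by simp
  then have "curv s * curv' t * (s - t) = (s - t)\<^sup>2 * (curv' z * curv' t)"
    by (simp add: power2_eq_square)
  also have "\<dots> > 0"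
    using nbhd z(2) assms by (simp add: inflexion_nbhd_def)
  finally show ?thesis .
qed

lemma curv_nonzero_near_inflexion: "\<bar>s - t\<bar> < d \<Longrightarrow> s \<noteq> t \<Longrightarrow> curv s \<noteq> 0"
  using curv_sign_near_inflexion by fastforce

lemma has_real_derivative_tan_angle_near_inflexion:
  assumes "\<bar>x - t\<bar> < d"
  shows "(tan_angle t has_real_derivative
           (norm (Dn 1 f t))\<^sup>2 * curv x / (Dn 1 f t \<bullet> Dn 1 f x)\<^sup>2) (at x)"
  using nbhd assms by (intro has_real_derivative_tan_angle) (auto simp: inflexion_nbhd_def)

lemma tan_angle_sign_near_inflexion:
  assumes "\<bar>s - t\<bar> < d" "s \<noteq> t"
  shows "0 < tan_angle t s * curv' t"
proof -
  define c where "c x = (norm (Dn 1 f t))\<^sup>2 / (Dn 1 f t \<bullet> Dn 1 f x)\<^sup>2" for x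
  have deriv: "(tan_angle t has_real_derivative c x * curv x) (at x)"
    if "\<bar>x - t\<bar> \<le> \<bar>s - t\<bar>" for x
    using has_real_derivative_tan_angle_near_inflexion[of x] that assms(1) by (simp add: c_def)
  obtain z where z: "0 < (z - t) * (s - t)" "\<bar>z - t\<bar> < \<bar>s - t\<bar>"
      "tan_angle t s - tan_angle t t = (s - t) * (c z * curv z)"
    using MVT_between[OF assms(2) deriv] by blast
  have "0 < c z"
    using Dn1_nonzero inflexion_nbhdD(1)[of z] z(2) assms(1) by (simp add: c_def)
  moreover have "0 < curv z * curv' t * (z - t)"
    using z(1,2) assms(1) by (intro curv_sign_near_inflexion) auto
  ultimately have "0 < c z * (curv z * curv' t * (z - t)) * ((z - t) * (s - t))"
    using z(1) by simp
  also have "\<dots> = ((s - t) * (c z * curv z) * curv' t) * (z - t)\<^sup>2"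
    by (simp add: power2_eq_square algebra_simps)
  finally have "0 < (s - t) * (c z * curv z) * curv' t"
    using z(1) by (auto simp: zero_less_mult_iff)
  then show ?thesis
    using z(3) by simp
qed

lemma parallel_near_inflexion_opposite_sides:
  assumes "\<bar>a - t\<bar> < d" "\<bar>b - t\<bar> < d" "a \<noteq> b" "cross (Dn 1 f a) (Dn 1 f b) = 0"
  shows "(a - t) * (b - t) < 0"
proof -
  have between: "a' < t \<and> t < b'"
    if lt: "a' < b'" and a': "\<bar>a' - t\<bar> < d" and b': "\<bar>b' - t\<bar> < d"
      and eq: "tan_angle t a' = tan_angle t b'" for a' b'
  proof -
    define D where "D x = (norm (Dn 1 f t))\<^sup>2 * curv x / (Dn 1 f t \<bullet> Dn 1 f x)\<^sup>2" for x
    have deriv: "(tan_angle t has_real_derivative D x) (at x)" if "a' \<le> x" "x \<le> b'" for x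
      unfolding D_def using that a' b' by (intro has_real_derivative_tan_angle_near_inflexion) auto
    then have "continuous_on {a'..b'} (tan_angle t)"
      by (auto intro!: continuous_at_imp_continuous_on DERIV_isCont)
    moreover have "tan_angle t differentiable (at x)" if "a' < x" "x < b'" for x
      using deriv[of x] that by (auto simp: real_differentiable_def)
    ultimately obtain z where z: "a' < z" "z < b'" "(tan_angle t has_real_derivative 0) (at z)"
      using Rolle[OF lt eq] by blast
    then have "D z = 0"
      using DERIV_unique[OF deriv[of z]] by simp
    moreover have "\<bar>z - t\<bar> < d"
      using z a' b' by auto
    moreover have "0 < Dn 1 f t \<bullet> Dn 1 f z"
      using nbhd \<open>\<bar>z - t\<bar> < d\<close> by (simp add: inflexion_nbhd_def)
    ultimately have "z = t"
      using curv_nonzero_near_inflexion Dn1_nonzero[of t] by (auto simp: D_def)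
    then show ?thesis
      using z by simp
  qed
  have "tan_angle t a = tan_angle t b"
    by (rule tan_angle_parallel[OF assms(4)])
  then show ?thesis
    using between[of a b] between[of b a] assms(1-3)
    by (cases "a < b") (auto simp: mult_less_0_iff)
qed

lemma parallel_near_inflexion_curv_opposite:
  assumes "\<bar>a - t\<bar> < d" "\<bar>b - t\<bar> < d" "a \<noteq> b" "cross (Dn 1 f a) (Dn 1 f b) = 0"
  shows "curv a * curv b < 0"
proof -
  have opp: "(a - t) * (b - t) < 0"
    using parallel_near_inflexion_opposite_sides[OF assms] .
  then have "a \<noteq> t" "b \<noteq> t"
    by auto
  then have "0 < (curv a * curv' t * (a - t)) * (curv b * curv' t * (b - t))"
    using curv_sign_near_inflexion assms(1,2) by simp
  also have "\<dots> = (curv a * curv b) * ((curv' t)\<^sup>2 * ((a - t) * (b - t)))"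
    by (simp add: power2_eq_square algebra_simps)
  finally show ?thesis
    using opp curv'_nonzero[OF inflexion] by (auto simp: zero_less_mult_iff mult_less_0_iff)
qed

lemma parallel_near_inflexion_codirected:
  assumes "\<bar>a - t\<bar> < d" "\<bar>b - t\<bar> < d" "cross (Dn 1 f a) (Dn 1 f b) = 0"
  obtains \<mu> where "0 < \<mu>" "Dn 1 f a = \<mu> *\<^sub>R Dn 1 f b"
proof -
  obtain \<mu> where \<mu>: "Dn 1 f a = \<mu> *\<^sub>R Dn 1 f b"
    using assms(3) cross_commute[of "Dn 1 f a"] parallel_tangents_scaleR[of b a] by auto
  have "0 < Dn 1 f t \<bullet> Dn 1 f a" "0 < Dn 1 f t \<bullet> Dn 1 f b"
    using inflexion_nbhdD assms(1,2) by auto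
  with \<mu> have "0 < \<mu>"
    by (simp add: zero_less_mult_iff)
  with \<mu> show ?thesis
    using that by blast
qed

end

end

section \<open>Branches of the centre symmetry set\<close>

lemma eventually_at_right_0_in_unit: "\<forall>\<^sub>F u in at_right (0::real). u \<in> {0<..<1}"
  and eventually_at_left_1_in_unit: "\<forall>\<^sub>F u in at_left (1::real). u \<in> {0<..<1}"
  unfolding eventually_at_right_field eventually_at_left_field
  by (intro exI[of _ 1] exI[of _ 0]; simp)+

locale css_branch = generic_plane_curve +
  fixes \<sigma> \<tau> :: "real \<Rightarrow> real" and t1 t2 :: real
  assumes branch: "css_branch_connecting f \<sigma> \<tau> t1 t2"
begin

definition \<sigma>' :: "real \<Rightarrow> real" where
  "\<sigma>' u = vector_derivative \<sigma> (at u)"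

definition \<tau>' :: "real \<Rightarrow> real" where
  "\<tau>' u = vector_derivative \<tau> (at u)"

lemma has_real_derivative_\<sigma>: "u \<in> {0<..<1} \<Longrightarrow> (\<sigma> has_real_derivative \<sigma>' u) (at u)"
  and has_real_derivative_\<tau>: "u \<in> {0<..<1} \<Longrightarrow> (\<tau> has_real_derivative \<tau>' u) (at u)"
  using branch
  by (auto simp: css_branch_connecting_def C1_differentiable_on_eq \<sigma>'_def \<tau>'_def
      has_real_derivative_iff_has_vector_derivative vector_derivative_works)

lemma continuous_on_\<sigma>': "continuous_on {0<..<1} \<sigma>'"
  and continuous_on_\<tau>': "continuous_on {0<..<1} \<tau>'"
  using branch by (simp_all add: css_branch_connecting_def C1_differentiable_on_eq \<sigma>'_def[abs_def] \<tau>'_def[abs_def])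

lemma branch_parallel_pair: "u \<in> {0<..<1} \<Longrightarrow> parallel_pair f (\<sigma> u) (\<tau> u)"
  using branch by (simp add: css_branch_connecting_def)

lemma branch_regular: "u \<in> {0<..<1} \<Longrightarrow> \<sigma>' u \<noteq> 0 \<or> \<tau>' u \<noteq> 0"
  using branch by (simp add: css_branch_connecting_def \<sigma>'_def \<tau>'_def)

definition A :: "real \<Rightarrow> real" where
  "A u = cross (Dn 2 f (\<sigma> u)) (Dn 1 f (\<tau> u))"

definition B :: "real \<Rightarrow> real" where
  "B u = cross (Dn 1 f (\<sigma> u)) (Dn 2 f (\<tau> u))"

(* By branch_tangent_orthogonal, (\<sigma>' u, \<tau>' u) = Q u / (A u\<^sup>2 + B u\<^sup>2) * (- B u, A u):
   the sign of Q records the direction in which u runs along the branch. *)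
definition Q :: "real \<Rightarrow> real" where
  "Q u = A u * \<tau>' u - B u * \<sigma>' u"

lemma branch_tangent_orthogonal:
  assumes u: "u \<in> {0<..<1}"
  shows "A u * \<sigma>' u + B u * \<tau>' u = 0"
proof -
  have "((\<lambda>u. Dn 1 f (\<sigma> u)) has_vector_derivative \<sigma>' u *\<^sub>R Dn 2 f (\<sigma> u)) (at u)"
    and "((\<lambda>u. Dn 1 f (\<tau> u)) has_vector_derivative \<tau>' u *\<^sub>R Dn 2 f (\<tau> u)) (at u)"
    using vector_diff_chain_at[OF has_real_derivative_\<sigma>[OF u, unfolded has_real_derivative_iff_has_vector_derivative]
        has_vector_derivative_Dn1]
      vector_diff_chain_at[OF has_real_derivative_\<tau>[OF u, unfolded has_real_derivative_iff_has_vector_derivative]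
        has_vector_derivative_Dn1]
    by (simp_all add: o_def)
  from has_real_derivative_cross[OF this]
  have "((\<lambda>u. cross (Dn 1 f (\<sigma> u)) (Dn 1 f (\<tau> u))) has_real_derivative A u * \<sigma>' u + B u * \<tau>' u) (at u)"
    by (simp add: A_def B_def mult.commute)
  moreover have "((\<lambda>u. cross (Dn 1 f (\<sigma> u)) (Dn 1 f (\<tau> u))) has_real_derivative 0) (at u)"
  proof (rule has_field_derivative_transform_within_open[OF DERIV_const[of 0] open_greaterThanLessThan u])
    show "0 = cross (Dn 1 f (\<sigma> x)) (Dn 1 f (\<tau> x))" if "x \<in> {0<..<1}" for x
      using branch_parallel_pair[OF that] by (simp add: parallel_pair_def)
  qed
  ultimately show ?thesis
    by (rule DERIV_unique)
qed

lemma Q_mult_\<sigma>':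
  assumes "u \<in> {0<..<1}"
  shows "Q u * \<sigma>' u = - B u * ((\<sigma>' u)\<^sup>2 + (\<tau>' u)\<^sup>2)"
proof -
  have "A u * \<sigma>' u = - (B u * \<tau>' u)"
    using branch_tangent_orthogonal[OF assms] by (simp add: eq_neg_iff_add_eq_0)
  have "Q u * \<sigma>' u = \<tau>' u * (A u * \<sigma>' u) - B u * (\<sigma>' u)\<^sup>2"
    by (simp add: Q_def power2_eq_square algebra_simps)
  also have "\<dots> = - B u * ((\<sigma>' u)\<^sup>2 + (\<tau>' u)\<^sup>2)"
    unfolding \<open>A u * \<sigma>' u = - (B u * \<tau>' u)\<close> by (simp add: power2_eq_square algebra_simps)
  finally show ?thesis .
qed

lemma Q_nonzero:
  assumes u: "u \<in> {0<..<1}"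
  shows "Q u \<noteq> 0"
proof
  assume "Q u = 0"
  moreover have "((A u)\<^sup>2 + (B u)\<^sup>2) * \<sigma>' u = A u * (A u * \<sigma>' u + B u * \<tau>' u) - B u * Q u"
    and "((A u)\<^sup>2 + (B u)\<^sup>2) * \<tau>' u = B u * (A u * \<sigma>' u + B u * \<tau>' u) + A u * Q u"
    by (simp_all add: Q_def power2_eq_square algebra_simps)
  ultimately have "((A u)\<^sup>2 + (B u)\<^sup>2) * \<sigma>' u = 0" "((A u)\<^sup>2 + (B u)\<^sup>2) * \<tau>' u = 0"
    using branch_tangent_orthogonal[OF u] by simp_all
  then have "(A u)\<^sup>2 + (B u)\<^sup>2 = 0"
    using branch_regular[OF u] by auto
  then have "A u = 0" "B u = 0"
    by (simp_all add: sum_power2_eq_zero_iff)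
  have par: "cross (Dn 1 f (\<sigma> u)) (Dn 1 f (\<tau> u)) = 0"
    using branch_parallel_pair[OF u] by (simp add: parallel_pair_def)
  then obtain \<mu> where "\<mu> \<noteq> 0" "Dn 1 f (\<tau> u) = \<mu> *\<^sub>R Dn 1 f (\<sigma> u)"
    by (rule parallel_tangents_scaleR)
  then have "A u = - \<mu> * curv (\<sigma> u)"
    unfolding A_def curv_def by (simp add: cross_commute[of "Dn 2 f (\<sigma> u)"])
  with \<open>A u = 0\<close> \<open>\<mu> \<noteq> 0\<close> have "curv (\<sigma> u) = 0"
    by simp
  from par have "cross (Dn 1 f (\<tau> u)) (Dn 1 f (\<sigma> u)) = 0"
    using cross_commute[of "Dn 1 f (\<tau> u)"] by simp
  then obtain \<nu> where "\<nu> \<noteq> 0" "Dn 1 f (\<sigma> u) = \<nu> *\<^sub>R Dn 1 f (\<tau> u)"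
    by (rule parallel_tangents_scaleR)
  then have "B u = \<nu> * curv (\<tau> u)"
    unfolding B_def curv_def by simp
  with \<open>B u = 0\<close> \<open>\<nu> \<noteq> 0\<close> have "curv (\<tau> u) = 0"
    by simp
  with \<open>curv (\<sigma> u) = 0\<close> show False
    using parallel_pair_not_both_inflexions[OF branch_parallel_pair[OF u]] by blast
qed

lemma continuous_on_Q: "continuous_on {0<..<1} Q"
proof -
  have "continuous_on {0<..<1} \<sigma>" "continuous_on {0<..<1} \<tau>"
    using has_real_derivative_\<sigma> has_real_derivative_\<tau> DERIV_isCont
    by (blast intro: continuous_at_imp_continuous_on)+
  moreover have "continuous_on UNIV (Dn n f)" for n
    by (simp add: continuous_at_imp_continuous_on isCont_Dn)
  ultimately have "continuous_on {0<..<1} (\<lambda>u. Dn n f (\<sigma> u))" "continuous_on {0<..<1} (\<lambda>u. Dn n f (\<tau> u))" for n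
    by (auto intro: continuous_on_compose2)
  then show ?thesis
    unfolding Q_def[abs_def] A_def B_def cross_def
    by (intro continuous_intros continuous_on_\<sigma>' continuous_on_\<tau>') auto
qed

lemma Q_same_sign: "u \<in> {0<..<1} \<Longrightarrow> v \<in> {0<..<1} \<Longrightarrow> 0 < Q u * Q v"
  using nonzero_imp_same_sign[OF _ continuous_on_Q Q_nonzero] by simp

definition turn :: "real \<Rightarrow> real \<Rightarrow> real" where
  "turn t u = tan_angle t (\<sigma> u) * curv' t"

lemma turn_near_inflexion:
  assumes inflexion: "curv t = 0" and nbhd: "inflexion_nbhd t d" and u: "u \<in> {0<..<1}"
    and a: "same_param a (\<sigma> u)" "\<bar>a - t\<bar> < d" and b: "same_param b (\<tau> u)" "\<bar>b - t\<bar> < d"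
  shows "0 < turn t u" and "turn t differentiable (at u)"
    and "0 < Q u * deriv (turn t) u * curv' t"
proof -
  have Dn_\<sigma>: "Dn n f (\<sigma> u) = Dn n f a" and Dn_\<tau>: "Dn n f (\<tau> u) = Dn n f b" for n
    using Dn_same_param a(1) b(1) by blast+
  have "a \<noteq> b"
    using branch_parallel_pair[OF u] Dn_\<sigma>[of 0] Dn_\<tau>[of 0] by (auto simp: parallel_pair_def)
  have par: "cross (Dn 1 f a) (Dn 1 f b) = 0"
    using branch_parallel_pair[OF u] by (simp add: parallel_pair_def Dn_\<sigma> Dn_\<tau>)
  then have "a \<noteq> t"
    using parallel_near_inflexion_opposite_sides[OF inflexion nbhd a(2) b(2) \<open>a \<noteq> b\<close>] by auto
  then show "0 < turn t u"
    using tan_angle_sign_near_inflexion[OF inflexion nbhd a(2)] tan_angle_same_param[OF a(1)]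
    by (simp add: turn_def)
  obtain \<mu> where "0 < \<mu>" "Dn 1 f a = \<mu> *\<^sub>R Dn 1 f b"
    using parallel_near_inflexion_codirected[OF inflexion nbhd a(2) b(2) par] .
  then have "B u = \<mu> * curv b"
    unfolding B_def curv_def Dn_\<sigma> Dn_\<tau> by simp
  define c where "c = (norm (Dn 1 f t))\<^sup>2 / (Dn 1 f t \<bullet> Dn 1 f a)\<^sup>2"
  have "0 < Dn 1 f t \<bullet> Dn 1 f a"
    using inflexion_nbhdD[OF inflexion nbhd a(2)] by simp
  then have "0 < c"
    using Dn1_nonzero by (simp add: c_def)
  have "(tan_angle t has_real_derivative c * curv a) (at (\<sigma> u))"
    using has_real_derivative_tan_angle[of t "\<sigma> u"] \<open>0 < Dn 1 f t \<bullet> Dn 1 f a\<close>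
    by (simp add: Dn_\<sigma> curv_def c_def)
  from DERIV_chain2[OF this has_real_derivative_\<sigma>[OF u]]
  have deriv: "(turn t has_real_derivative c * curv a * \<sigma>' u * curv' t) (at u)"
    unfolding turn_def[abs_def] by (intro DERIV_cmult_right) simp
  then show "turn t differentiable (at u)"
    by (auto simp: real_differentiable_def)
  have "Q u * deriv (turn t) u * curv' t = (Q u * \<sigma>' u) * c * curv a * (curv' t)\<^sup>2"
    using DERIV_imp_deriv[OF deriv] by (simp add: power2_eq_square algebra_simps)
  also have "\<dots> = (\<mu> * ((\<sigma>' u)\<^sup>2 + (\<tau>' u)\<^sup>2) * c * (curv' t)\<^sup>2) * - (curv a * curv b)"
    unfolding Q_mult_\<sigma>'[OF u] \<open>B u = \<mu> * curv b\<close> by (simp add: algebra_simps)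
  also have "\<dots> > 0"
    using \<open>0 < \<mu>\<close> \<open>0 < c\<close> branch_regular[OF u] curv'_nonzero[OF inflexion]
      parallel_near_inflexion_curv_opposite[OF inflexion nbhd a(2) b(2) \<open>a \<noteq> b\<close> par]
    by (intro mult_pos_pos) (auto simp: sum_power2_gt_zero_iff)
  finally show "0 < Q u * deriv (turn t) u * curv' t" .
qed

lemma turn_at_branch_end:
  assumes "curv t = 0"
    and \<sigma>_lim: "((\<lambda>u. cis (\<sigma> u)) \<longlongrightarrow> cis t) F" and \<tau>_lim: "((\<lambda>u. cis (\<tau> u)) \<longlongrightarrow> cis t) F"
    and "\<forall>\<^sub>F u in F. u \<in> {0<..<1}"
  shows "(turn t \<longlongrightarrow> 0) F"
    and "\<forall>\<^sub>F u in F. 0 < turn t u \<and> turn t differentiable (at u) \<and> 0 < Q u * deriv (turn t) u * curv' t"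
proof -
  obtain a where a: "\<And>u. same_param (a u) (\<sigma> u)" and "(a \<longlongrightarrow> t) F"
    using tendsto_cis_obtain_representative[OF \<sigma>_lim] by blast
  obtain b where b: "\<And>u. same_param (b u) (\<tau> u)" and "(b \<longlongrightarrow> t) F"
    using tendsto_cis_obtain_representative[OF \<tau>_lim] by blast
  have "isCont (tan_angle t) t"
    using has_real_derivative_tan_angle[of t t] Dn1_nonzero DERIV_isCont by simp
  then have "((\<lambda>u. tan_angle t (a u) * curv' t) \<longlongrightarrow> tan_angle t t * curv' t) F"
    by (intro tendsto_mult_right isCont_tendsto_compose[OF _ \<open>(a \<longlongrightarrow> t) F\<close>])
  then show "(turn t \<longlongrightarrow> 0) F"
    using tan_angle_same_param[OF a] by (simp add: turn_def[abs_def])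
  obtain d where "inflexion_nbhd t d"
    using inflexion_nbhd_exists[OF assms(1)] .
  then have "0 < d"
    by (simp add: inflexion_nbhd_def)
  then have "\<forall>\<^sub>F u in F. \<bar>a u - t\<bar> < d" "\<forall>\<^sub>F u in F. \<bar>b u - t\<bar> < d"
    using \<open>(a \<longlongrightarrow> t) F\<close> \<open>(b \<longlongrightarrow> t) F\<close> by (auto dest: tendstoD simp: dist_real_def)
  with assms(4) show "\<forall>\<^sub>F u in F. 0 < turn t u \<and> turn t differentiable (at u) \<and>
      0 < Q u * deriv (turn t) u * curv' t"
    by eventually_elim
      (use turn_near_inflexion[OF assms(1) \<open>inflexion_nbhd t d\<close> _ a _ b] in blast)
qed

lemma curv'_sign_at_start: "\<exists>u\<in>{0<..<1}. 0 < Q u * curv' t1"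
proof -
  have lim: "(turn t1 \<longlongrightarrow> 0) (at_right 0)"
    and ev: "\<forall>\<^sub>F u in at_right 0. 0 < turn t1 u \<and> turn t1 differentiable (at u) \<and>
      0 < Q u * deriv (turn t1) u * curv' t1"
    using branch turn_at_branch_end[OF _ _ _ eventually_at_right_0_in_unit]
    by (auto simp: css_branch_connecting_def inflexion_iff_curv)
  from ev have "\<forall>\<^sub>F u in at_right 0. 0 < turn t1 u \<and>
      (turn t1 has_real_derivative deriv (turn t1) u) (at u)"
    by eventually_elim (simp add: DERIV_deriv_iff_real_differentiable)
  with lim have "\<exists>\<^sub>F u in at_right 0. 0 < deriv (turn t1) u"
    by (rule frequently_pos_deriv_at_right)
  moreover have "\<forall>\<^sub>F u in at_right 0. u \<in> {0<..<1} \<and> 0 < Q u * deriv (turn t1) u * curv' t1"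
    using eventually_at_right_0_in_unit ev by eventually_elim simp
  ultimately have "\<exists>\<^sub>F u in at_right 0.
      0 < deriv (turn t1) u \<and> u \<in> {0<..<1} \<and> 0 < Q u * deriv (turn t1) u * curv' t1"
    by (rule frequently_eventually_frequently)
  then obtain u where "u \<in> {0<..<1}" "0 < deriv (turn t1) u" "0 < Q u * deriv (turn t1) u * curv' t1"
    by (auto dest: frequently_ex)
  then have "0 < Q u * curv' t1"
    by (auto simp: zero_less_mult_iff mult_less_0_iff)
  with \<open>u \<in> {0<..<1}\<close> show ?thesis ..
qed

lemma curv'_sign_at_end: "\<exists>u\<in>{0<..<1}. Q u * curv' t2 < 0"
proof -
  have lim: "(turn t2 \<longlongrightarrow> 0) (at_left 1)"
    and ev: "\<forall>\<^sub>F u in at_left 1. 0 < turn t2 u \<and> turn t2 differentiable (at u) \<and>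
      0 < Q u * deriv (turn t2) u * curv' t2"
    using branch turn_at_branch_end[OF _ _ _ eventually_at_left_1_in_unit]
    by (auto simp: css_branch_connecting_def inflexion_iff_curv)
  from ev have "\<forall>\<^sub>F u in at_left 1. 0 < turn t2 u \<and>
      (turn t2 has_real_derivative deriv (turn t2) u) (at u)"
    by eventually_elim (simp add: DERIV_deriv_iff_real_differentiable)
  with lim have "\<exists>\<^sub>F u in at_left 1. deriv (turn t2) u < 0"
    by (rule frequently_neg_deriv_at_left)
  moreover have "\<forall>\<^sub>F u in at_left 1. u \<in> {0<..<1} \<and> 0 < Q u * deriv (turn t2) u * curv' t2"
    using eventually_at_left_1_in_unit ev by eventually_elim simp
  ultimately have "\<exists>\<^sub>F u in at_left 1.
      deriv (turn t2) u < 0 \<and> u \<in> {0<..<1} \<and> 0 < Q u * deriv (turn t2) u * curv' t2"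
    by (rule frequently_eventually_frequently)
  then obtain u where "u \<in> {0<..<1}" "deriv (turn t2) u < 0" "0 < Q u * deriv (turn t2) u * curv' t2"
    by (auto dest: frequently_ex)
  then have "Q u * curv' t2 < 0"
    by (auto simp: zero_less_mult_iff mult_less_0_iff)
  with \<open>u \<in> {0<..<1}\<close> show ?thesis ..
qed

lemma curv'_opposite_signs_at_ends: "curv' t1 * curv' t2 < 0"
proof -
  obtain u v where "u \<in> {0<..<1}" "0 < Q u * curv' t1" "v \<in> {0<..<1}" "Q v * curv' t2 < 0"
    using curv'_sign_at_start curv'_sign_at_end by blast
  moreover from this have "0 < Q u * Q v"
    by (intro Q_same_sign)
  ultimately show ?thesis
    by (auto simp: zero_less_mult_iff mult_less_0_iff)
qed

end

theorem theorem4p17: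
  fixes f :: "real \<Rightarrow> complex" and \<sigma> \<tau> :: "real \<Rightarrow> real" and t1 t2 :: real
  assumes "generic_curve f"
    and "css_branch_connecting f \<sigma> \<tau> t1 t2"
    and "\<not> same_param t1 t2"
  shows "even (card {s \<in> arc_params t1 t2. inflexion f s})"
proof -
  interpret css_branch f \<sigma> \<tau> t1 t2
    by unfold_locales (rule assms)+
  obtain T where "same_param t2 T" "t1 < T" and arc: "arc_params t1 t2 = {t1<..<T}"
    using arc_params_eq_interval[OF assms(3)] .
  have "curv t1 = 0" "curv T = 0"
    using assms(2) curv_same_param[OF \<open>same_param t2 T\<close>]
    by (auto simp: css_branch_connecting_def inflexion_iff_curv)
  moreover have "curv' t1 * curv' T < 0"
    using curv'_opposite_signs_at_ends curv'_same_param[OF \<open>same_param t2 T\<close>] by simp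
  ultimately have "even (card {s \<in> {t1<..<T}. curv s = 0})"
    using \<open>t1 < T\<close> by (intro even_card_simple_zeros_between[OF has_real_derivative_curv curv'_nonzero])
  then show ?thesis
    by (simp add: arc inflexion_iff_curv)
qed

end
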